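(* Let $\lambda(z)=z+\sum_{n\ge1}c_nz^{-n}$ be a formal series (the weak-coupling limit of the Lax operator $\boldsymbol L=\partial+\sum_{i\ge2}u_i\partial^{-i+1}$, with $\partial\to z$), and let $z(\lambda)=\lambda+O(\lambda^{-1})$ be its formal inverse. For $n\ge1$, the negative-power part $[\lambda(z)^n]_-$ (in $z$) can be uniquely re-expanded as $[\lambda(z)^n]_-=\sum_{m\ge1}\frac{v_{nm}}{m}\lambda(z)^{-m}$; this defines constants $v_{nm}$. Write $z_i=z(\lambda_i)$. Then, as formal series in $\lambda_1^{-1},\lambda_2^{-1}$, $$-\sum_{n,m\ge1}\frac{v_{nm}}{m}\lambda_1^{-n-1}\lambda_2^{-m}=\partial_{\lambda_1}\ln\frac{z_1-z_2}{\lambda_1-\lambda_2},$$ and consequently, with $\zeta_i=\lambda_i^p$ for an integer $p\ge2$, $$\frac{d\lambda_1}{d\zeta_1}\frac{d\lambda_2}{d\zeta_2}\Bigl(\sum_{n,m\ge1}v_{nm}\lambda_1^{-n-1}\lambda_2^{-m-1}+\frac1{(\lambda_1-\lambda_2)^2}\Bigr)-\frac1{(\zeta_1-\zeta_2)^2}=\partial_{\zeta_1}\partial_{\zeta_2}\ln\frac{z_1-z_2}{\zeta_1-\zeta_2},$$ i.e. the genus-zero FZZT annulus amplitude $\langle\partial\varphi_0(\zeta_1)\partial\varphi_0(\zeta_2)\rangle_{\rm c}^{(0)}$ depends only on the uniformization map $\zeta=\lambda(z)^p$.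
   Context: Here $[f(z)]_-$ denotes the sum of the terms with negative powers of $z$ in a formal Laurent series $f(z)$. Note $(z_1-z_2)/(\lambda_1-\lambda_2)=1+O(\lambda_1^{-1}\lambda_2^{-1})$ is a formal power series in $\lambda_1^{-1},\lambda_2^{-1}$, so its logarithm is well defined; $\ln((z_1-z_2)/(\zeta_1-\zeta_2))=\ln((z_1-z_2)/(\lambda_1-\lambda_2))-\ln((\zeta_1-\zeta_2)/(\lambda_1-\lambda_2))$. In the paper the coefficients $v_{nm}$ are the genus-zero two-point functions $\langle\mathcal O_n\mathcal O_m\rangle_{\rm c}^{(0)}$, and the displayed left-hand side of the second identity is the definition of $\langle\partial\varphi_0(\zeta_1)\partial\varphi_0(\zeta_2)\rangle_{\rm c}^{(0)}$. *)

theory Defs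
  imports "HOL-Computational_Algebra.Computational_Algebra"
begin

unbundle fps_syntax
notation fls_nth (infixl \<open>$$\<close> 75)

text \<open>One-variable series: the variable of an 'a fls is w = z^(-1)
  (for lambda(z)) or u = lambda^(-1) (for z(lambda)).  Two-variable objects live in the
  field 'a fls fls of iterated Laurent series: the outer variable is t = 1/lambda1,
  the inner (coefficient) variable is s = 1/lambda2.\<close>

text \<open>lambda(z) = z + sum_{n>=1} c_n z^(-n), as a Laurent series in w = 1/z.\<close>
definition lam_ser :: "(nat \<Rightarrow> 'a::field_char_0) \<Rightarrow> 'a fls" where
  "lam_ser c = fls_X_inv + fps_to_fls (Abs_fps (\<lambda>n. if n \<ge> 1 then c n else 0))"

text \<open>a(w) = 1/lambda(1/w), a power series with a(0)=0, a'(0)=1.\<close>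
definition lam_inv_ps :: "(nat \<Rightarrow> 'a::field_char_0) \<Rightarrow> 'a fps" where
  "lam_inv_ps c = fls_regpart (inverse (lam_ser c))"

text \<open>Formal inverse z(lambda) = 1 / b(1/lambda), where b is the compositional inverse of a;
  as a Laurent series in u = 1/lambda.\<close>
definition z_ser :: "(nat \<Rightarrow> 'a::field_char_0) \<Rightarrow> 'a fls" where
  "z_ser c = inverse (fps_to_fls (fps_inv (lam_inv_ps c)))"

text \<open>[lambda(z)^n]_- : the part of lambda(z)^n with negative powers of z, i.e. positive
  powers of w, as a power series in w.\<close>
definition neg_part :: "(nat \<Rightarrow> 'a::field_char_0) \<Rightarrow> nat \<Rightarrow> 'a fps" where
  "neg_part c n = Abs_fps (\<lambda>k. if k \<ge> 1 then (lam_ser c ^ n) $$ int k else 0)"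

text \<open>v_{nm}: the unique G = sum_{m>=1} (v_{nm}/m) X^m with [lambda^n]_- = G(lambda^(-1)).\<close>
definition vcoef :: "(nat \<Rightarrow> 'a::field_char_0) \<Rightarrow> nat \<Rightarrow> nat \<Rightarrow> 'a" where
  "vcoef c n m = of_nat m *
     (THE G. G $ 0 = 0 \<and> G oo lam_inv_ps c = neg_part c n) $ m"

text \<open>Embedding of a series in the outer variable (lambda1) and the inner one (lambda2).\<close>
definition outer :: "'a::field fls \<Rightarrow> 'a fls fls" where
  "outer f = Abs_fls (\<lambda>n. fls_const (f $$ n))"

definition inner :: "'a::field fls \<Rightarrow> 'a fls fls" where
  "inner f = fls_const f"

text \<open>Partial derivatives with respect to t and s, and with respect to lambda1, lambda2
  (d/dlambda = - t^2 d/dt).\<close>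
definition deriv_t :: "'a::field fls fls \<Rightarrow> 'a fls fls" where
  "deriv_t F = fls_deriv F"

definition deriv_s :: "'a::field fls fls \<Rightarrow> 'a fls fls" where
  "deriv_s F = Abs_fls (\<lambda>n. fls_deriv (F $$ n))"

definition d_lam1 :: "'a::field fls fls \<Rightarrow> 'a fls fls" where
  "d_lam1 F = - (fls_X ^ 2) * deriv_t F"

definition d_lam2 :: "'a::field fls fls \<Rightarrow> 'a fls fls" where
  "d_lam2 F = - (inner fls_X ^ 2) * deriv_s F"

definition lam1 :: "'a::field fls fls" where "lam1 = fls_X_inv"
definition lam2 :: "'a::field fls fls" where "lam2 = inner fls_X_inv"

text \<open>sum_{n,m>=1} (v_{nm}/m) lambda1^(-n-1) lambda2^(-m).\<close>
definition S1 :: "(nat \<Rightarrow> 'a::field_char_0) \<Rightarrow> 'a fls fls" where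
  "S1 c = fps_to_fls (Abs_fps (\<lambda>k. if k \<ge> 2 then
      fps_to_fls (Abs_fps (\<lambda>m. if m \<ge> 1 then vcoef c (k - 1) m / of_nat m else 0))
    else 0))"

text \<open>sum_{n,m>=1} v_{nm} lambda1^(-n-1) lambda2^(-m-1).\<close>
definition S2 :: "(nat \<Rightarrow> 'a::field_char_0) \<Rightarrow> 'a fls fls" where
  "S2 c = fps_to_fls (Abs_fps (\<lambda>k. if k \<ge> 2 then
      fps_to_fls (Abs_fps (\<lambda>m. if m \<ge> 2 then vcoef c (k - 1) (m - 1) else 0))
    else 0))"

end

theory Submission
  imports Defs
begin

text \<open>Substituting lambda2 = lambda(w) in the inner variable (so that z2 becomes 1/w) is an
  injective field homomorphism commuting with d/dlambda1, so the first identity reduces to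
  d/dlambda1 log((z1 - 1/w) / (lambda1 - lambda(w))) = - sum_n [lambda(w)^n]_- lambda1^(-n-1).
  Here d/dlambda1 log(lambda1 - lambda(w)) = sum_n lambda(w)^n lambda1^(-n-1), while
  d/dlambda1 log(z1 - 1/w) = sum_m z1' z1^(-m-1) w^(-m), and by Lagrange inversion (a change of
  variables in a residue) the coefficient of lambda1^(-n-1) in z1' z1^(-m-1) is the coefficient of
  z^m in lambda(z)^n; so the difference of the two is exactly the negative part.
  The second identity is formal calculus with two commuting derivations: passing from lambda_i to
  zeta_i = lambda_i^p trades the mixed log-derivative of lambda1 - lambda2 for that of
  zeta1 - zeta2.\<close>

section \<open>Field homomorphisms and coefficientwise maps of Laurent series\<close>

lemma fls_times_nth_bounds:
  fixes f g :: "'a::comm_semiring_0 fls"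
  assumes "\<And>i. i < L \<Longrightarrow> f $$ i = 0" "\<And>i. i < M \<Longrightarrow> g $$ i = 0"
  shows "(f * g) $$ n = (\<Sum>i=L..n-M. f $$ i * g $$ (n - i))"
proof (cases "f = 0 \<or> g = 0")
  case False
  then have "L \<le> fls_subdegree f" "M \<le> fls_subdegree g"
    using assms by (auto intro: fls_subdegree_geI)
  then show ?thesis
    unfolding fls_times_nth(2) by (intro sum.mono_neutral_left) auto
qed auto

definition fls_map :: "('a::zero \<Rightarrow> 'b::zero) \<Rightarrow> 'a fls \<Rightarrow> 'b fls" where
  "fls_map \<phi> f = Abs_fls (\<lambda>n. \<phi> (f $$ n))"

lemma fls_map_nth [simp]: "\<phi> 0 = 0 \<Longrightarrow> fls_map \<phi> f $$ n = \<phi> (f $$ n)"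
  unfolding fls_map_def
  by (rule nth_Abs_fls_ex_lower_bound) (auto intro!: exI[of _ "fls_subdegree f"])

locale field_hom =
  fixes hom :: "'a::field \<Rightarrow> 'b::field"
  assumes hom_one [simp]: "hom 1 = 1"
    and hom_add [simp]: "hom (x + y) = hom x + hom y"
    and hom_mult [simp]: "hom (x * y) = hom x * hom y"
begin

lemma hom_zero [simp]: "hom 0 = 0"
proof -
  have "hom 0 + hom 0 = hom 0 + 0"
    by (simp flip: hom_add)
  then show ?thesis
    by (rule add_left_imp_eq)
qed

lemma hom_uminus [simp]: "hom (- x) = - hom x"
  using hom_add[of x "- x"] by (simp add: add_eq_0_iff)

lemma hom_diff [simp]: "hom (x - y) = hom x - hom y"
  using hom_add[of x "- y"] by simp

lemma hom_inverse [simp]: "hom (inverse x) = inverse (hom x)"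
proof (cases "x = 0")
  case False
  then have "hom x * hom (inverse x) = 1"
    by (simp flip: hom_mult)
  then show ?thesis
    by (metis inverse_unique)
qed simp

lemma hom_divide [simp]: "hom (x / y) = hom x / hom y"
  by (simp add: divide_inverse)

lemma hom_power [simp]: "hom (x ^ n) = hom x ^ n"
  by (induction n) simp_all

lemma hom_of_nat [simp]: "hom (of_nat n) = of_nat n"
  by (induction n) simp_all

lemma hom_of_int [simp]: "hom (of_int k) = of_int k"
  by (cases k rule: int_cases4) simp_all

lemma hom_eq_0_iff [simp]: "hom x = 0 \<longleftrightarrow> x = 0"
proof
  assume "hom x = 0"
  show "x = 0"
  proof (rule ccontr)
    assume "x \<noteq> 0"
    have "1 = hom (x * inverse x)"
      by (simp only: right_inverse[OF \<open>x \<noteq> 0\<close>] hom_one)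
    also have "\<dots> = 0"
      using \<open>hom x = 0\<close> by (simp only: hom_mult mult_zero_left)
    finally show False
      by simp
  qed
qed simp

lemma hom_inj: "hom x = hom y \<Longrightarrow> x = y"
  using hom_eq_0_iff[of "x - y"] by simp

lemma hom_sum [simp]: "hom (sum f A) = (\<Sum>x\<in>A. hom (f x))"
  by (induction A rule: infinite_finite_induct) simp_all

lemma field_hom_fls_map: "field_hom (fls_map hom)"
proof
  fix f g :: "'a fls"
  show "fls_map hom 1 = 1" "fls_map hom (f + g) = fls_map hom f + fls_map hom g"
    by (auto intro: fls_eqI simp: fls_one_nth)
  show "fls_map hom (f * g) = fls_map hom f * fls_map hom g"
  proof (rule fls_eqI)
    fix n
    have "fls_map hom (f * g) $$ n =
        (\<Sum>i=fls_subdegree f..n - fls_subdegree g. fls_map hom f $$ i * fls_map hom g $$ (n - i))"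
      by (simp add: fls_times_nth(2))
    also have "\<dots> = (fls_map hom f * fls_map hom g) $$ n"
      by (rule fls_times_nth_bounds[symmetric]) simp_all
    finally show "fls_map hom (f * g) $$ n = (fls_map hom f * fls_map hom g) $$ n" .
  qed
qed

lemma fls_map_deriv: "fls_map hom (fls_deriv f) = fls_deriv (fls_map hom f)"
  by (rule fls_eqI) simp

lemma fls_map_X [simp]: "fls_map hom fls_X = fls_X"
  and fls_map_const [simp]: "fls_map hom (fls_const a) = fls_const (hom a)"
  by (auto intro: fls_eqI)

end

lemma field_hom_fls_const: "field_hom fls_const"
  by unfold_locales (simp_all add: fls_plus_const)

lemma field_hom_fls_compose_fps:
  "b \<noteq> 0 \<Longrightarrow> b $ 0 = 0 \<Longrightarrow> field_hom (\<lambda>f. fls_compose_fps f b)"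
  by unfold_locales (simp_all add: fls_compose_fps_add fls_compose_fps_mult)

section \<open>Derivations and logarithmic derivatives\<close>

locale derivation =
  fixes D :: "'a::field \<Rightarrow> 'a"
  assumes D_add: "D (x + y) = D x + D y"
    and D_mult: "D (x * y) = D x * y + x * D y"
begin

lemma D_0 [simp]: "D 0 = 0"
proof -
  have "D 0 + D 0 = D 0 + 0"
    using D_add[of 0 0] by simp
  then show ?thesis
    by (rule add_left_imp_eq)
qed

lemma D_1 [simp]: "D 1 = 0"
proof -
  have "D 1 + D 1 = D 1 + 0"
    using D_mult[of 1 1] by simp
  then show ?thesis
    by (rule add_left_imp_eq)
qed

lemma D_uminus: "D (- x) = - D x"
  using D_add[of x "- x"] by (simp add: add_eq_0_iff)

lemma D_diff: "D (x - y) = D x - D y"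
  using D_add[of x "- y"] by (simp add: D_uminus)

lemma D_inverse: "D (inverse x) = - D x / x ^ 2"
proof (cases "x = 0")
  case False
  have "0 = D (x * inverse x)"
    using False by simp
  also have "\<dots> = D x * inverse x + x * D (inverse x)"
    by (rule D_mult)
  finally have x_D_inverse: "x * D (inverse x) = - (D x * inverse x)"
    by (simp add: eq_neg_iff_add_eq_0 add.commute)
  have "D (inverse x) = x * D (inverse x) / x"
    using False by simp
  also have "\<dots> = - D x / x ^ 2"
    unfolding x_D_inverse by (simp add: power2_eq_square divide_inverse)
  finally show ?thesis .
qed simp

lemma D_divide: "D (x / y) = (D x * y - x * D y) / y ^ 2"
proof (cases "y = 0")
  case False
  have "D (x / y) = D x * inverse y + x * (- D y / y ^ 2)"
    by (simp only: divide_inverse D_mult D_inverse)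
  also have "\<dots> = (D x * y - x * D y) / y ^ 2"
    using False by (simp add: divide_simps power2_eq_square)
  finally show ?thesis .
qed simp

lemma D_power: "D (x ^ n) = of_nat n * x ^ (n - 1) * D x"
proof (induction n)
  case (Suc n)
  then show ?case
    by (cases n) (simp_all add: D_mult algebra_simps)
qed simp

lemma D_powi: "D (x powi k) = of_int k * x powi (k - 1) * D x"
proof (cases k rule: int_cases4)
  case (nonneg n)
  then show ?thesis
  proof (cases n)
    case (Suc m)
    then have "k - 1 = int m"
      using nonneg by simp
    then show ?thesis
      using nonneg Suc by (simp only: power_int_of_nat D_power of_int_of_nat_eq) simp
  qed simp
next
  case (neg n)
  show ?thesis
  proof (cases "x = 0")
    case False
    have "n - 1 + Suc n = n + n"
      using neg by simp
    then have "(x ^ n) ^ 2 = x ^ (n - 1) * x ^ Suc n"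
      by (metis power2_eq_square power_add)
    then have "D (x powi k) = - (of_nat n * D x) / x ^ Suc n"
      using neg False by (simp add: power_int_minus D_inverse D_power)
    moreover have "x powi (k - 1) = inverse (x ^ Suc n)"
    proof -
      have "k - 1 = - int (Suc n)"
        using neg by simp
      then show ?thesis
        by (simp only: power_int_minus power_int_of_nat)
    qed
    ultimately show ?thesis
      using neg by (simp add: divide_inverse)
  qed (use neg in \<open>simp add: power_int_0_left_if\<close>)
qed

end

definition logderiv :: "('a::field \<Rightarrow> 'a) \<Rightarrow> 'a \<Rightarrow> 'a" where
  "logderiv D x = D x / x"

context derivation
begin

lemma logderiv_mult: "x \<noteq> 0 \<Longrightarrow> y \<noteq> 0 \<Longrightarrow> logderiv D (x * y) = logderiv D x + logderiv D y"
  unfolding logderiv_def D_mult by (simp add: add_divide_distrib)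

lemma logderiv_divide: "x \<noteq> 0 \<Longrightarrow> y \<noteq> 0 \<Longrightarrow> logderiv D (x / y) = logderiv D x - logderiv D y"
  using logderiv_mult[of "x / y" y] by simp

end

lemma derivation_scale: "derivation D \<Longrightarrow> derivation (\<lambda>x. c * D x)"
  unfolding derivation_def by (simp add: algebra_simps)

locale commuting_derivations = D1: derivation D1 + D2: derivation D2
  for D1 D2 :: "'a::field \<Rightarrow> 'a" +
  assumes commute: "D1 (D2 x) = D2 (D1 x)"
begin

lemma logderiv_commute: "D1 (logderiv D2 x) = D2 (logderiv D1 x)"
  unfolding logderiv_def D1.D_divide D2.D_divide commute by (simp only: mult.commute)

lemma mixed_logderiv_diff:
  assumes "D1 b = 0" "D2 a = 0"
  shows "D1 (logderiv D2 (a - b)) = D1 a * D2 b / (a - b) ^ 2"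
proof -
  have "logderiv D2 (a - b) = (- D2 b) * inverse (a - b)"
    using assms by (simp add: logderiv_def D2.D_diff divide_inverse)
  then have "D1 (logderiv D2 (a - b)) = D1 (- D2 b) * inverse (a - b) + (- D2 b) * D1 (inverse (a - b))"
    by (simp only: D1.D_mult)
  moreover have "D1 (- D2 b) = 0"
    using assms by (simp add: D1.D_uminus commute)
  ultimately show ?thesis
    using assms by (simp add: D1.D_inverse D1.D_diff)
qed

text \<open>Each \<zeta>i may be any function of li alone; the two correction terms are the mixed
  log-derivatives of l1 - l2 and of \<zeta>1 - \<zeta>2.\<close>

lemma mixed_logderiv_change_of_variables:
  assumes coords: "D1 l1 = 1" "D2 l2 = 1" "D1 l2 = 0" "D2 l1 = 0"
    and new_coords: "D1 \<zeta>2 = 0" "D2 \<zeta>1 = 0" "D1 \<zeta>1 \<noteq> 0" "D2 \<zeta>2 \<noteq> 0"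
    and "Z \<noteq> 0"
  shows "inverse (D1 \<zeta>1) * inverse (D2 \<zeta>2) * (D2 (logderiv D1 (Z / (l1 - l2))) + 1 / (l1 - l2) ^ 2)
           - 1 / (\<zeta>1 - \<zeta>2) ^ 2
         = inverse (D1 \<zeta>1) * D1 (logderiv (\<lambda>G. inverse (D2 \<zeta>2) * D2 G) (Z / (\<zeta>1 - \<zeta>2)))"
proof -
  define e where "e = inverse (D2 \<zeta>2)"
  define L where "L = l1 - l2"
  define T where "T = \<zeta>1 - \<zeta>2"
  have "L \<noteq> 0" "T \<noteq> 0"
    using coords new_coords by (auto simp: L_def T_def D1.D_diff)
  then have "logderiv D2 (Z / T) = logderiv D2 (Z / L) + logderiv D2 L - logderiv D2 T"
    using \<open>Z \<noteq> 0\<close> D2.logderiv_mult[of "Z / L" L] D2.logderiv_divide[of Z T] by simp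
  moreover have "D1 (logderiv D2 L) = 1 / L ^ 2"
    using mixed_logderiv_diff[of l2 l1] coords by (simp add: L_def)
  moreover have "D1 (logderiv D2 T) = D1 \<zeta>1 * D2 \<zeta>2 / T ^ 2"
    using mixed_logderiv_diff[of \<zeta>2 \<zeta>1] new_coords by (simp add: T_def)
  ultimately have "D1 (logderiv D2 (Z / T)) =
      D2 (logderiv D1 (Z / L)) + 1 / L ^ 2 - D1 \<zeta>1 * D2 \<zeta>2 / T ^ 2"
    by (simp add: D1.D_add D1.D_diff logderiv_commute)
  moreover have "D1 e = 0"
    by (simp add: e_def D1.D_inverse commute new_coords)
  moreover have "logderiv (\<lambda>G. e * D2 G) (Z / T) = e * logderiv D2 (Z / T)"
    by (simp add: logderiv_def)
  ultimately have D1_logderiv: "D1 (logderiv (\<lambda>G. e * D2 G) (Z / T)) =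
      e * (D2 (logderiv D1 (Z / L)) + 1 / L ^ 2 - D1 \<zeta>1 * D2 \<zeta>2 / T ^ 2)"
    by (simp add: D1.D_mult)
  have "inverse (D1 \<zeta>1) * D1 (logderiv (\<lambda>G. e * D2 G) (Z / T)) =
      inverse (D1 \<zeta>1) * e * (D2 (logderiv D1 (Z / L)) + 1 / L ^ 2)
        - inverse (D1 \<zeta>1) * e * (D1 \<zeta>1 * D2 \<zeta>2) / T ^ 2"
    unfolding D1_logderiv by (simp add: divide_inverse algebra_simps)
  also have "inverse (D1 \<zeta>1) * e * (D1 \<zeta>1 * D2 \<zeta>2) = 1"
    using new_coords by (simp add: e_def field_simps)
  finally show ?thesis
    by (simp add: e_def L_def T_def)
qed

end

section \<open>Residues under substitution\<close>

interpretation fls_deriv: derivation "fls_deriv :: 'a::field fls \<Rightarrow> 'a fls"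
  by unfold_locales (simp_all add: algebra_simps)

lemma fls_residue_powi_times_deriv:
  fixes b :: "'a::field_char_0 fps"
  assumes "b $ 0 = 0" "b $ 1 \<noteq> 0"
  shows "fls_residue (fps_to_fls b powi k * fls_deriv (fps_to_fls b)) = (if k = -1 then 1 else 0)"
proof (cases "k = -1")
  case True
  have "subdegree b = 1"
    using assms by (intro subdegreeI) auto
  then have "fls_subdegree (fps_to_fls b) = 1"
    by (simp add: fls_subdegree_fls_to_fps)
  then show ?thesis
    using True fls_residue_deriv_times_inverse_eq_subdegree(2)[of "fps_to_fls b"]
    by (simp add: power_int_minus)
next
  case False
  let ?B = "fps_to_fls b"
  have "fls_deriv (?B powi (k + 1)) = of_int (k + 1) * (?B powi k * fls_deriv ?B)"
    by (simp add: fls_deriv.D_powi mult.assoc)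
  then have "of_int (k + 1) * fls_residue (?B powi k * fls_deriv ?B) = 0"
    by (metis fls_residue_deriv fls_residue_of_int_times(1))
  moreover have "(of_int (k + 1) :: 'a) \<noteq> 0"
    using False by (simp only: of_int_eq_0_iff)
  ultimately show ?thesis
    using False by (simp del: of_int_add)
qed

lemma fls_decompose_principal_part:
  fixes f :: "'a::field fls"
  shows "f = fps_to_fls (fls_regpart f) + (\<Sum>k\<in>{fls_subdegree f..-1}. fls_const (f $$ k) * fls_X powi k)"
proof (rule fls_eqI)
  fix n
  have principal_nth: "(\<Sum>k\<in>{fls_subdegree f..-1}. fls_const (f $$ k) * fls_X powi k) $$ n
      = (\<Sum>k\<in>{fls_subdegree f..-1}. if n = k then f $$ k else 0)"
    by (simp add: fls_nth_sum if_distrib[of "\<lambda>x. _ * x"] cong: if_cong)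
  show "f $$ n = (fps_to_fls (fls_regpart f) +
      (\<Sum>k\<in>{fls_subdegree f..-1}. fls_const (f $$ k) * fls_X powi k)) $$ n"
    unfolding fls_plus_nth principal_nth by (cases "n < fls_subdegree f") (auto simp: sum.delta)
qed

lemma fls_residue_compose_fps:
  fixes b :: "'a::field_char_0 fps"
  assumes "b $ 0 = 0" "b $ 1 \<noteq> 0"
  shows "fls_residue (fls_compose_fps f b * fls_deriv (fps_to_fls b)) = fls_residue f"
proof -
  have "b \<noteq> 0"
    using assms by auto
  interpret \<sigma>: field_hom "\<lambda>f. fls_compose_fps f b"
    by (rule field_hom_fls_compose_fps) fact+
  let ?B' = "fls_deriv (fps_to_fls b)" and ?I = "{fls_subdegree f..-1}"
  let ?P = "\<Sum>k\<in>?I. fls_const (f $$ k) * fls_X powi k"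
  have "fls_compose_fps f b = fls_compose_fps (fps_to_fls (fls_regpart f)) b + fls_compose_fps ?P b"
    by (subst fls_decompose_principal_part) simp
  moreover have "fls_residue (fls_compose_fps (fps_to_fls (fls_regpart f)) b * ?B') = 0"
    using \<open>b \<noteq> 0\<close> assms by (simp add: fls_deriv_fps_to_fls flip: fls_times_fps_to_fls)
  moreover have "fls_compose_fps (fls_X powi k) b = fps_to_fls b powi k" for k
    using \<open>b \<noteq> 0\<close> assms by (simp add: fls_compose_fps_powi del: fls_X_power_int)
  then have "fls_residue (fls_compose_fps ?P b * ?B') = (\<Sum>k\<in>?I. f $$ k * (if k = -1 then 1 else 0))"
    using fls_residue_powi_times_deriv[OF assms]
    by (simp add: sum_distrib_right fls_nth_sum mult.assoc del: fls_X_power_int)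
  moreover have "(\<Sum>k\<in>?I. f $$ k * (if k = -1 then 1 else 0)) = f $$ -1"
    by (cases "-1 < fls_subdegree f") (auto simp: if_distrib[of "\<lambda>x. _ * x"] sum.delta' cong: if_cong)
  ultimately show ?thesis
    by (simp add: distrib_right)
qed

section \<open>Series in two variables\<close>

lemma fls_X_times_X_inv: "(fls_X :: 'a::field fls) * fls_X_inv = 1"
  by (simp add: fls_inverse_X[symmetric])

interpretation inner: field_hom "inner :: 'a::field fls \<Rightarrow> 'a fls fls"
  unfolding inner_def[abs_def] by (rule field_hom_fls_const)

lemma outer_eq_fls_map: "outer = fls_map fls_const"
  by (rule ext) (simp add: outer_def fls_map_def)

lemma outer_nth: "outer f $$ n = fls_const (f $$ n)"
  by (simp add: outer_eq_fls_map)

interpretation outer: field_hom "outer :: 'a::field fls \<Rightarrow> 'a fls fls"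
  unfolding outer_eq_fls_map by (rule field_hom.field_hom_fls_map[OF field_hom_fls_const])

lemma outer_X [simp]: "outer fls_X = fls_X"
  and outer_X_inv [simp]: "outer fls_X_inv = fls_X_inv"
  by (auto intro: fls_eqI simp: outer_nth)

interpretation deriv_t: derivation "deriv_t :: 'a::field fls fls \<Rightarrow> _"
  by unfold_locales (simp_all add: deriv_t_def algebra_simps)

lemma deriv_s_nth [simp]: "deriv_s F $$ n = fls_deriv (F $$ n)"
  by (simp add: deriv_s_def fls_map_def[symmetric])

interpretation deriv_s: derivation "deriv_s :: 'a::field fls fls \<Rightarrow> _"
proof
  fix x y :: "'a fls fls"
  show "deriv_s (x + y) = deriv_s x + deriv_s y"
    by (rule fls_eqI) simp
  show "deriv_s (x * y) = deriv_s x * y + x * deriv_s y"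
  proof (rule fls_eqI)
    fix n
    let ?L = "fls_subdegree x" and ?M = "fls_subdegree y"
    have "deriv_s (x * y) $$ n = (\<Sum>i=?L..n-?M. deriv_s x $$ i * y $$ (n - i)) +
        (\<Sum>i=?L..n-?M. x $$ i * deriv_s y $$ (n - i))"
      by (simp add: fls_times_nth(2) fls_deriv_sum sum.distrib algebra_simps)
    also have "\<dots> = (deriv_s x * y) $$ n + (x * deriv_s y) $$ n"
      by (subst (1 2) fls_times_nth_bounds[where L = ?L and M = ?M]) auto
    finally show "deriv_s (x * y) $$ n = (deriv_s x * y + x * deriv_s y) $$ n"
      by simp
  qed
qed

lemma deriv_t_inner [simp]: "deriv_t (inner g) = 0"
  by (simp add: deriv_t_def inner_def)

lemma deriv_s_inner [simp]: "deriv_s (inner g) = inner (fls_deriv g)"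
  by (rule fls_eqI) (simp add: inner_def)

lemma deriv_s_outer [simp]: "deriv_s (outer f) = 0"
  by (rule fls_eqI) (simp add: outer_nth)

lemma deriv_t_outer [simp]: "deriv_t (outer f) = outer (fls_deriv f)"
  unfolding deriv_t_def outer_eq_fls_map
  by (rule field_hom.fls_map_deriv[OF field_hom_fls_const, symmetric])

lemma deriv_t_deriv_s_commute: "deriv_t (deriv_s F) = deriv_s (deriv_t F)"
proof (rule fls_eqI)
  fix n
  have "fls_deriv (of_int (n + 1) * F $$ (n + 1)) = of_int (n + 1) * fls_deriv (F $$ (n + 1))"
    by (simp add: fls_deriv_mult)
  then show "deriv_t (deriv_s F) $$ n = deriv_s (deriv_t F) $$ n"
    by (simp add: deriv_t_def)
qed

interpretation d_lam1: derivation "d_lam1 :: 'a::field fls fls \<Rightarrow> _"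
  unfolding d_lam1_def[abs_def] by (rule derivation_scale[OF deriv_t.derivation_axioms])

interpretation d_lam2: derivation "d_lam2 :: 'a::field fls fls \<Rightarrow> _"
  unfolding d_lam2_def[abs_def] by (rule derivation_scale[OF deriv_s.derivation_axioms])

interpretation d_lam: commuting_derivations "d_lam1 :: 'a::field fls fls \<Rightarrow> _" d_lam2
proof
  fix F :: "'a fls fls"
  have "deriv_s (fls_X ^ 2 :: 'a fls fls) = 0"
    using deriv_s_outer[of "fls_X ^ 2 :: 'a fls"] by simp
  moreover have "deriv_t (inner fls_X ^ 2 :: 'a fls fls) = 0"
    using deriv_t_inner[of "fls_X ^ 2 :: 'a fls"] by simp
  ultimately show "d_lam1 (d_lam2 F) = d_lam2 (d_lam1 F)"
    by (simp add: d_lam1_def d_lam2_def deriv_t.D_mult deriv_s.D_mult deriv_t.D_uminus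
        deriv_s.D_uminus deriv_t_deriv_s_commute algebra_simps)
qed

lemma d_lam1_outer: "d_lam1 (outer f) = outer (- (fls_X ^ 2) * fls_deriv f)"
  by (simp add: d_lam1_def)

lemma d_lam1_inner [simp]: "d_lam1 (inner g) = 0"
  by (simp add: d_lam1_def)

lemma d_lam2_outer [simp]: "d_lam2 (outer f) = 0"
  by (simp add: d_lam2_def)

lemma d_lam1_lam1 [simp]: "d_lam1 lam1 = 1"
  and d_lam2_lam2 [simp]: "d_lam2 lam2 = 1"
  and d_lam1_lam2 [simp]: "d_lam1 lam2 = 0"
  and d_lam2_lam1 [simp]: "d_lam2 lam1 = 0"
proof -
  show "d_lam1 lam1 = 1"
    by (simp add: d_lam1_def deriv_t_def lam1_def fls_X_times_X_inv flip: power_mult_distrib)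
  show "d_lam2 lam2 = 1"
    by (simp add: d_lam2_def lam2_def fls_X_times_X_inv flip: power_mult_distrib inner.hom_mult)
  show "d_lam1 lam2 = 0"
    by (simp add: lam2_def)
  show "d_lam2 lam1 = 0"
    using d_lam2_outer[of fls_X_inv] by (simp add: lam1_def)
qed

section \<open>Lagrange inversion for z(lambda)\<close>

lemma fls_subdegree_lam_ser: "fls_subdegree (lam_ser c) = -1"
  by (rule fls_subdegree_eqI) (simp_all add: lam_ser_def)

lemma lam_inv_ps_to_fls: "fps_to_fls (lam_inv_ps c) = inverse (lam_ser c)"
  by (simp add: lam_inv_ps_def fls_subdegree_lam_ser)

lemma lam_inv_ps_nth_0 [simp]: "lam_inv_ps c $ 0 = 0"
  and lam_inv_ps_nth_1: "lam_inv_ps c $ 1 = 1"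
proof -
  have "lam_ser c \<noteq> 0" "lam_ser c $$ -1 = 1"
    using fls_subdegree_lam_ser[of c] by (auto simp: lam_ser_def)
  then show "lam_inv_ps c $ 0 = 0" "lam_inv_ps c $ 1 = 1"
    using fls_inverse_base[of "lam_ser c"] by (simp_all add: lam_inv_ps_def fls_subdegree_lam_ser)
qed

lemma lam_inv_ps_nonzero [simp]: "lam_inv_ps c \<noteq> 0"
  using lam_inv_ps_nth_1[of c] by auto

lemma fps_inv_lam_inv_ps_nth_0 [simp]: "fps_inv (lam_inv_ps c) $ 0 = 0"
  and fps_inv_lam_inv_ps_nth_1: "fps_inv (lam_inv_ps c) $ 1 = 1"
  using lam_inv_ps_nth_1[of c] by (simp_all add: fps_inv_def)

lemma fps_inv_lam_inv_ps_nonzero [simp]: "fps_inv (lam_inv_ps c) \<noteq> 0"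
  using fps_inv_lam_inv_ps_nth_1[of c] by auto

lemma lam_inv_ps_oo_inv: "lam_inv_ps c oo fps_inv (lam_inv_ps c) = fps_X"
  and fps_inv_oo_lam_inv_ps: "fps_inv (lam_inv_ps c) oo lam_inv_ps c = fps_X"
  using lam_inv_ps_nth_0[of c] lam_inv_ps_nth_1[of c] by (simp_all add: fps_inv_right fps_inv)

lemma vcoef_series:
  "Abs_fps (\<lambda>m. if m \<ge> 1 then vcoef c n m / of_nat m else 0) = neg_part c n oo fps_inv (lam_inv_ps c)"
proof -
  let ?a = "lam_inv_ps c" and ?G = "neg_part c n oo fps_inv (lam_inv_ps c)"
  have "?G oo ?a = neg_part c n oo (fps_inv ?a oo ?a)"
    by (rule fps_compose_assoc[symmetric]) simp_all
  then have G_oo_a: "?G oo ?a = neg_part c n"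
    by (simp add: fps_inv_oo_lam_inv_ps)
  have G_0: "?G $ 0 = 0"
    by (simp add: neg_part_def)
  have unique: "G = ?G" if "G oo ?a = neg_part c n" for G
  proof -
    have "?a $ 1 \<noteq> 0"
      using lam_inv_ps_nth_1[of c] by simp
    moreover have "G oo ?a = ?G oo ?a"
      using that G_oo_a by (rule trans_sym)
    ultimately show ?thesis
      using fps_compose_inj_right[OF lam_inv_ps_nth_0] by blast
  qed
  have "(THE G. G $ 0 = 0 \<and> G oo ?a = neg_part c n) = ?G"
    by (rule the_equality) (use G_0 G_oo_a unique in blast)+
  then show ?thesis
    using G_0 by (intro fps_ext) (auto simp: vcoef_def not_less_eq_eq)
qed

lemma z_ser_nonzero [simp]: "z_ser c \<noteq> 0"
  using fps_inv_lam_inv_ps_nonzero[of c] by (simp add: z_ser_def)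

definition z_deriv :: "(nat \<Rightarrow> 'a::field_char_0) \<Rightarrow> 'a fls" where
  "z_deriv c = - (fls_X ^ 2) * fls_deriv (z_ser c)"

definition z_deriv_div_pow :: "(nat \<Rightarrow> 'a::field_char_0) \<Rightarrow> nat \<Rightarrow> 'a fls" where
  "z_deriv_div_pow c m = z_deriv c * inverse (z_ser c ^ (m + 1))"

lemma z_deriv_div_pow_eq:
  "z_deriv_div_pow c m = fls_X powi 2 * fls_deriv (fps_to_fls (fps_inv (lam_inv_ps c))) *
     fps_to_fls (fps_inv (lam_inv_ps c)) powi (int m - 1)"
proof -
  define B where "B = fps_to_fls (fps_inv (lam_inv_ps c))"
  have "B \<noteq> 0"
    using fps_inv_lam_inv_ps_nonzero[of c] by (simp add: B_def)
  have "B powi (int m - 1) = B powi (int (m + 1) - int 2)"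
    by simp
  also have "\<dots> = B powi (int (m + 1)) / B powi (int 2)"
    using \<open>B \<noteq> 0\<close> by (intro power_int_diff) simp
  finally have B_powi: "B ^ (m + 1) / B ^ 2 = B powi (int m - 1)"
    by (simp only: power_int_of_nat)
  have "fls_deriv (z_ser c) = - fls_deriv B / B ^ 2"
    unfolding z_ser_def B_def by (rule fls_deriv.D_inverse)
  moreover have "inverse (z_ser c ^ (m + 1)) = B ^ (m + 1)"
    by (simp add: z_ser_def B_def power_inverse)
  ultimately have "z_deriv_div_pow c m = fls_X ^ 2 * fls_deriv B * (B ^ (m + 1) / B ^ 2)"
    unfolding z_deriv_div_pow_def z_deriv_def by (simp add: divide_inverse algebra_simps)
  then show ?thesis
    unfolding B_powi by (simp add: B_def del: fls_X_power_int)
qed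

text \<open>Lagrange inversion: the coefficient of lambda^(-k) in z'(lambda) z(lambda)^(-m-1) is the
  coefficient of z^m in lambda(z)^(k-1), by the change of variables w = b(u) in a residue, b being the inverse of a.\<close>

lemma z_deriv_div_pow_nth:
  "z_deriv_div_pow c m $$ k = (fps_to_fls (lam_inv_ps c) powi (1 - k)) $$ (- int m)"
proof -
  let ?a = "lam_inv_ps c" and ?b = "fps_inv (lam_inv_ps c)"
  let ?A = "fps_to_fls ?a" and ?B = "fps_to_fls ?b"
  have b: "?b \<noteq> 0" "?b $ 0 = 0" "?b $ 1 \<noteq> 0"
    using fps_inv_lam_inv_ps_nonzero fps_inv_lam_inv_ps_nth_0 fps_inv_lam_inv_ps_nth_1[of c]
    by simp_all
  have "fls_compose_fps ?A ?b = fls_X"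
    using b by (simp add: lam_inv_ps_oo_inv)
  then have subst: "fls_X powi (1 - k) * ?B powi (int m - 1) =
      fls_compose_fps (?A powi (1 - k) * fls_X powi (int m - 1)) ?b"
    by (simp only: fls_compose_fps_mult[OF b(1,2)] fls_compose_fps_powi[OF b(1,2)] fls_compose_fps_X)
  have "fls_X powi (- k - 1) * fls_X powi 2 = (fls_X powi (1 - k) :: 'a fls)"
    using power_int_add[of "fls_X :: 'a fls" "- k - 1" 2] by (simp del: fls_X_power_int)
  then have shifted: "fls_X powi (- k - 1) * z_deriv_div_pow c m =
      (fls_X powi (1 - k) * ?B powi (int m - 1)) * fls_deriv ?B"
    unfolding z_deriv_div_pow_eq by (simp del: fls_X_power_int add: algebra_simps)
  have "z_deriv_div_pow c m $$ k = fls_residue (fls_X powi (- k - 1) * z_deriv_div_pow c m)"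
    by (simp only: fls_residue_def fls_X_power_int fls_X_intpow_times_conv_shift fls_shift_nth) simp
  also have "\<dots> =
      fls_residue (fls_compose_fps (?A powi (1 - k) * fls_X powi (int m - 1)) ?b * fls_deriv ?B)"
    unfolding shifted subst ..
  also have "\<dots> = fls_residue (?A powi (1 - k) * fls_X powi (int m - 1))"
    by (rule fls_residue_compose_fps[OF b(2,3)])
  also have "\<dots> = (?A powi (1 - k)) $$ (- int m)"
    by (simp only: fls_residue_def fls_X_power_int fls_X_intpow_times_conv_shift fls_shift_nth) simp
  finally show ?thesis .
qed

lemma z_deriv_div_pow_nth_pos:
  assumes "k \<ge> 1"
  shows "z_deriv_div_pow c m $$ k = (lam_ser c ^ nat (k - 1)) $$ (- int m)"
proof -
  have "1 - k = - int (nat (k - 1))"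
    using assms by simp
  then have "fps_to_fls (lam_inv_ps c) powi (1 - k) = inverse (fps_to_fls (lam_inv_ps c) ^ nat (k - 1))"
    by (simp only: power_int_minus power_int_of_nat)
  then show ?thesis
    by (simp add: z_deriv_div_pow_nth lam_inv_ps_to_fls power_inverse)
qed

lemma z_deriv_div_pow_nth_nonpos:
  assumes "k \<le> 0"
  shows "z_deriv_div_pow c m $$ k = 0"
proof -
  define n where "n = nat (1 - k)"
  then have "1 - k = int n" "n \<ge> 1"
    using assms by simp_all
  then have "fps_to_fls (lam_inv_ps c) powi (1 - k) = fps_to_fls (lam_inv_ps c ^ n)"
    by (simp only: power_int_of_nat fps_to_fls_power)
  moreover have "(lam_inv_ps c ^ n) $ 0 = 0"
    using \<open>n \<ge> 1\<close> by (simp add: fps_nth_power_0)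
  ultimately show ?thesis
    by (simp add: z_deriv_div_pow_nth)
qed

lemma z_deriv_nonzero: "z_deriv c \<noteq> 0"
proof
  assume "z_deriv c = 0"
  then have "z_deriv_div_pow c 0 $$ 1 = 0"
    by (simp add: z_deriv_div_pow_def)
  then show False
    by (simp add: z_deriv_div_pow_nth_pos)
qed

abbreviation inner_coeff :: "int \<Rightarrow> 'a::zero fls fls \<Rightarrow> 'a fls" where
  "inner_coeff j \<equiv> fls_map (\<lambda>g. g $$ j)"

lemma inner_coeff_eqI: "(\<And>j. inner_coeff j F = inner_coeff j G) \<Longrightarrow> F = G"
proof (rule fls_eqI, rule fls_eqI)
  fix n j
  assume "\<And>j. inner_coeff j F = inner_coeff j G"
  then have "inner_coeff j F $$ n = inner_coeff j G $$ n"
    by simp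
  then show "F $$ n $$ j = G $$ n $$ j"
    by simp
qed

lemma inner_coeff_diff: "inner_coeff j (F - G) = inner_coeff j F - inner_coeff j G"
  by (rule fls_eqI) simp

lemma inner_coeff_outer: "inner_coeff j (outer f) = (if j = 0 then f else 0)"
  by (rule fls_eqI) (simp add: outer_nth)

lemma inner_coeff_outer_mult: "inner_coeff j (outer f * F) = f * inner_coeff j F"
proof (rule fls_eqI)
  fix k
  have "inner_coeff j (outer f * F) $$ k =
      (\<Sum>i=fls_subdegree f..k - fls_subdegree F. f $$ i * inner_coeff j F $$ (k - i))"
    by (simp add: fls_times_nth_bounds[of "fls_subdegree f" _ "fls_subdegree F"] outer_nth fls_nth_sum)
  also have "\<dots> = (f * inner_coeff j F) $$ k"
    by (rule fls_times_nth_bounds[symmetric]) auto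
  finally show "inner_coeff j (outer f * F) $$ k = (f * inner_coeff j F) $$ k" .
qed

lemma inner_coeff_inner_X_inv_mult: "inner_coeff j (inner fls_X_inv * F) = inner_coeff (j + 1) F"
  by (rule fls_eqI) (simp add: inner_def fls_X_inv_times_conv_shift)

definition lam_kernel :: "(nat \<Rightarrow> 'a::field_char_0) \<Rightarrow> 'a fls fls" where
  "lam_kernel c = Abs_fls (\<lambda>k. if k \<ge> 1 then lam_ser c ^ nat (k - 1) else 0)"

definition neg_part_kernel :: "(nat \<Rightarrow> 'a::field_char_0) \<Rightarrow> 'a fls fls" where
  "neg_part_kernel c =
     fps_to_fls (Abs_fps (\<lambda>k. if k \<ge> 2 then fps_to_fls (neg_part c (k - 1)) else 0))"

text \<open>z_kernel collects the non-negative powers of z in lam_kernel; coefficientwise in z it is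
  the expansion of dz1/dlambda1 / (z1 - z) in powers of z / z1.\<close>

definition z_kernel :: "(nat \<Rightarrow> 'a::field_char_0) \<Rightarrow> 'a fls fls" where
  "z_kernel c = lam_kernel c - neg_part_kernel c"

lemma lam_kernel_nth: "lam_kernel c $$ k = (if k \<ge> 1 then lam_ser c ^ nat (k - 1) else 0)"
  unfolding lam_kernel_def by (rule nth_Abs_fls_ex_lower_bound) (auto intro!: exI[of _ 1])

lemma neg_part_kernel_nth:
  "neg_part_kernel c $$ k $$ j = (if k \<ge> 2 \<and> j \<ge> 1 then (lam_ser c ^ nat (k - 1)) $$ j else 0)"
proof (cases "k \<ge> 2")
  case True
  then have "nat k - 1 = nat (k - 1)"
    by simp
  with True show ?thesis
    by (auto simp: neg_part_kernel_def neg_part_def)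
qed (auto simp: neg_part_kernel_def)

lemma inner_coeff_z_kernel:
  "inner_coeff j (z_kernel c) = (if j \<le> 0 then z_deriv_div_pow c (nat (- j)) else 0)"
proof (rule fls_eqI)
  fix k
  show "inner_coeff j (z_kernel c) $$ k = (if j \<le> 0 then z_deriv_div_pow c (nat (- j)) else 0) $$ k"
  proof (cases "k \<ge> 1")
    case True
    then show ?thesis
      by (cases "k = 1") (simp_all add: z_kernel_def lam_kernel_nth neg_part_kernel_nth
          z_deriv_div_pow_nth_pos)
  qed (simp add: z_kernel_def lam_kernel_nth neg_part_kernel_nth z_deriv_div_pow_nth_nonpos)
qed

lemma lam_kernel_inverse: "(lam1 - inner (lam_ser c)) * lam_kernel c = 1"
proof (rule fls_eqI)
  fix k
  have "((lam1 - inner (lam_ser c)) * lam_kernel c) $$ k = lam_kernel c $$ (k + 1) - lam_ser c * lam_kernel c $$ k"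
    by (simp add: lam1_def inner_def algebra_simps fls_X_inv_times_conv_shift)
  also have "\<dots> = (1 :: 'a fls fls) $$ k"
  proof (cases "k \<ge> 1")
    case True
    then have "nat k = Suc (nat (k - 1))"
      by simp
    then show ?thesis
      using True by (simp add: lam_kernel_nth)
  qed (simp add: lam_kernel_nth)
  finally show "((lam1 - inner (lam_ser c)) * lam_kernel c) $$ k = (1 :: 'a fls fls) $$ k" .
qed

lemma z_kernel_inverse: "(outer (z_ser c) - inner fls_X_inv) * z_kernel c = outer (z_deriv c)"
proof (rule inner_coeff_eqI)
  fix j
  have "inner_coeff j ((outer (z_ser c) - inner fls_X_inv) * z_kernel c) =
      z_ser c * inner_coeff j (z_kernel c) - inner_coeff (j + 1) (z_kernel c)"
    by (simp only: left_diff_distrib inner_coeff_diff inner_coeff_outer_mult inner_coeff_inner_X_inv_mult)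
  moreover have "z_ser c * z_deriv_div_pow c (Suc m) = z_deriv_div_pow c m" for m
  proof -
    have "z_ser c * z_deriv_div_pow c (Suc m) =
        z_deriv c * (z_ser c * inverse (z_ser c)) * inverse (z_ser c ^ (m + 1))"
      by (simp add: z_deriv_div_pow_def inverse_mult_distrib mult_ac)
    then show ?thesis
      by (simp add: z_deriv_div_pow_def)
  qed
  moreover have "nat (- j) = Suc (nat (- (j + 1)))" if "j < 0"
    using that by simp
  ultimately show "inner_coeff j ((outer (z_ser c) - inner fls_X_inv) * z_kernel c) =
      inner_coeff j (outer (z_deriv c))"
    unfolding inner_coeff_outer inner_coeff_z_kernel
    by (cases j "0::int" rule: linorder_cases) (simp_all add: z_deriv_div_pow_def)
qed

lemma logderiv_d_lam1_eq_neg_part_kernel: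
  "logderiv d_lam1 ((outer (z_ser c) - inner fls_X_inv) / (lam1 - inner (lam_ser c))) =
     - neg_part_kernel c"
proof -
  let ?N = "outer (z_ser c) - inner fls_X_inv" and ?D = "lam1 - inner (lam_ser c)"
  have "outer (z_deriv c) \<noteq> 0"
    by (simp add: z_deriv_nonzero)
  then have "?N \<noteq> 0"
    using z_kernel_inverse[of c] by auto
  have "?D \<noteq> 0"
    using lam_kernel_inverse[of c] by auto
  have "d_lam1 ?N = outer (z_deriv c)"
    by (simp add: d_lam1.D_diff d_lam1_outer z_deriv_def)
  then have "logderiv d_lam1 ?N = z_kernel c"
    using z_kernel_inverse[of c] \<open>?N \<noteq> 0\<close>
    by (simp add: logderiv_def nonzero_divide_eq_eq mult.commute)
  moreover have "logderiv d_lam1 ?D = lam_kernel c"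
    using lam_kernel_inverse[of c] \<open>?D \<noteq> 0\<close>
    by (simp add: logderiv_def d_lam1.D_diff nonzero_divide_eq_eq mult.commute)
  ultimately show ?thesis
    using \<open>?N \<noteq> 0\<close> \<open>?D \<noteq> 0\<close> by (simp add: d_lam1.logderiv_divide z_kernel_def)
qed

text \<open>The substitution lambda2 := lambda(w) in the inner variable, i.e. s := a(w); it sends
  z2 to 1/w.\<close>

definition subst_inner :: "(nat \<Rightarrow> 'a::field_char_0) \<Rightarrow> 'a fls fls \<Rightarrow> 'a fls fls" where
  "subst_inner c = fls_map (\<lambda>g. fls_compose_fps g (lam_inv_ps c))"

lemma field_hom_compose_lam_inv_ps: "field_hom (\<lambda>g. fls_compose_fps g (lam_inv_ps c))"
  by (rule field_hom_fls_compose_fps) simp_all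

lemma field_hom_subst_inner: "field_hom (subst_inner c)"
  unfolding subst_inner_def by (rule field_hom.field_hom_fls_map[OF field_hom_compose_lam_inv_ps])

lemma subst_inner_nth: "subst_inner c F $$ k = fls_compose_fps (F $$ k) (lam_inv_ps c)"
  by (simp add: subst_inner_def)

lemma subst_inner_outer: "subst_inner c (outer f) = outer f"
  by (rule fls_eqI) (simp add: subst_inner_nth outer_nth)

lemma subst_inner_inner: "subst_inner c (inner g) = inner (fls_compose_fps g (lam_inv_ps c))"
  unfolding subst_inner_def inner_def
  by (rule field_hom.fls_map_const[OF field_hom_compose_lam_inv_ps])

lemma subst_inner_d_lam1: "subst_inner c (d_lam1 F) = d_lam1 (subst_inner c F)"
proof -
  interpret \<sigma>: field_hom "subst_inner c"
    by (rule field_hom_subst_inner)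
  have "subst_inner c (deriv_t F) = deriv_t (subst_inner c F)"
    unfolding subst_inner_def deriv_t_def by (rule field_hom.fls_map_deriv[OF field_hom_compose_lam_inv_ps])
  moreover have "subst_inner c fls_X = fls_X"
    unfolding subst_inner_def by (rule field_hom.fls_map_X[OF field_hom_compose_lam_inv_ps])
  ultimately show ?thesis
    by (simp add: d_lam1_def)
qed

lemma subst_inner_lam1: "subst_inner c lam1 = lam1"
  using subst_inner_outer[of c fls_X_inv] by (simp add: lam1_def)

lemma subst_inner_lam2: "subst_inner c lam2 = inner (lam_ser c)"
proof -
  have "fls_compose_fps fls_X_inv (lam_inv_ps c) = inverse (fps_to_fls (lam_inv_ps c))"
    by (simp add: fls_compose_fps_inverse flip: fls_inverse_X)
  then show ?thesis
    by (simp add: lam2_def subst_inner_inner lam_inv_ps_to_fls)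
qed

lemma subst_inner_z2: "subst_inner c (inner (z_ser c)) = inner fls_X_inv"
proof -
  have "fls_compose_fps (z_ser c) (lam_inv_ps c) = fls_X_inv"
    by (simp add: z_ser_def fls_compose_fps_inverse fps_inv_oo_lam_inv_ps fls_inverse_X)
  then show ?thesis
    by (simp add: subst_inner_inner)
qed

lemma subst_inner_S1: "subst_inner c (S1 c) = neg_part_kernel c"
proof (rule fls_eqI)
  fix k
  show "subst_inner c (S1 c) $$ k = neg_part_kernel c $$ k"
  proof (cases "k \<ge> 2")
    case True
    let ?n = "nat k - 1"
    have "S1 c $$ k = fps_to_fls (Abs_fps (\<lambda>m. if m \<ge> 1 then vcoef c ?n m / of_nat m else 0))"
      using True by (simp add: S1_def)
    then have "S1 c $$ k = fps_to_fls (neg_part c ?n oo fps_inv (lam_inv_ps c))"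
      by (simp only: vcoef_series)
    moreover have "(neg_part c ?n oo fps_inv (lam_inv_ps c)) oo lam_inv_ps c = neg_part c ?n"
      by (simp add: fps_compose_assoc[symmetric] fps_inv_oo_lam_inv_ps)
    ultimately show ?thesis
      using True by (simp add: subst_inner_nth neg_part_kernel_def)
  qed (auto simp: S1_def subst_inner_nth neg_part_kernel_def)
qed

lemma S1_eq_logderiv:
  "- S1 c = logderiv d_lam1 ((outer (z_ser c) - inner (z_ser c)) / (lam1 - lam2))"
proof (rule field_hom.hom_inj[OF field_hom_subst_inner])
  interpret \<sigma>: field_hom "subst_inner c"
    by (rule field_hom_subst_inner)
  show "subst_inner c (- S1 c) =
      subst_inner c (logderiv d_lam1 ((outer (z_ser c) - inner (z_ser c)) / (lam1 - lam2)))"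
    by (simp add: logderiv_def subst_inner_d_lam1 subst_inner_S1 subst_inner_outer subst_inner_z2
        subst_inner_lam1 subst_inner_lam2 flip: logderiv_d_lam1_eq_neg_part_kernel)
qed

lemma d_lam2_S1: "d_lam2 (- S1 c) = S2 c"
proof (rule fls_eqI, rule fls_eqI)
  fix k j
  have d_lam2_neg_S1: "d_lam2 (- S1 c) = inner (fls_X ^ 2) * deriv_s (S1 c)"
    by (simp add: d_lam2_def deriv_s.D_uminus)
  show "d_lam2 (- S1 c) $$ k $$ j = S2 c $$ k $$ j"
  proof (cases "k \<ge> 2")
    case True
    define n where "n = nat k - 1"
    define G where "G = Abs_fps (\<lambda>m. if m \<ge> 1 then vcoef c n m / of_nat m else (0::'a))"
    have "2 \<le> nat k"
      using True by simp
    then have "S1 c $$ k = fps_to_fls G"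
      unfolding G_def n_def using True by (simp add: S1_def)
    then have "d_lam2 (- S1 c) $$ k $$ j = (fls_X ^ 2 * fps_to_fls (fps_deriv G)) $$ j"
      unfolding d_lam2_neg_S1 by (simp add: inner_def fls_deriv_fps_to_fls)
    also have "\<dots> = (if j \<ge> 2 then vcoef c n (nat j - 1) else 0)"
    proof (cases "j \<ge> 2")
      case True
      then have "nat (j - 2) + 1 = nat j - 1"
        by simp
      then have "fps_deriv G $ nat (j - 2) = vcoef c n (nat j - 1)"
        using True by (simp only: fps_deriv_nth) (simp add: G_def)
      then show ?thesis
        using True by (simp add: fls_X_power_times_conv_shift)
    qed (simp add: fls_X_power_times_conv_shift)
    also have "\<dots> = S2 c $$ k $$ j"
      using True by (simp add: S2_def n_def) arith
    finally show ?thesis .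
  next
    case False
    then show ?thesis
      unfolding d_lam2_neg_S1 by (auto simp: inner_def S1_def S2_def)
  qed
qed

lemma outer_minus_inner_z_ser_nonzero: "outer (z_ser c) - inner (z_ser c) \<noteq> 0"
proof
  interpret \<sigma>: field_hom "subst_inner c"
    by (rule field_hom_subst_inner)
  assume "outer (z_ser c) - inner (z_ser c) = 0"
  then have "subst_inner c (outer (z_ser c) - inner (z_ser c)) = 0"
    by simp
  then have "outer (z_ser c) - inner fls_X_inv = 0"
    by (simp only: \<sigma>.hom_diff subst_inner_outer subst_inner_z2)
  then have "outer (z_deriv c) = 0"
    using z_kernel_inverse[of c] by simp
  then show False
    by (simp add: z_deriv_nonzero)
qed

theorem theorem6:
  fixes c :: "nat \<Rightarrow> 'a::field_char_0" and p :: nat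
  assumes "p \<ge> 2"
  shows
    "(let z1 = outer (z_ser c); z2 = inner (z_ser c);
          F = (z1 - z2) / (lam1 - lam2)
      in - S1 c = d_lam1 F / F)
   \<and> (let z1 = outer (z_ser c); z2 = inner (z_ser c);
          \<zeta>1 = lam1 ^ p; \<zeta>2 = lam2 ^ p;
          dl1 = inverse (of_nat p * lam1 ^ (p - 1));
          dl2 = inverse (of_nat p * lam2 ^ (p - 1));
          d\<zeta>1 = (\<lambda>G. dl1 * d_lam1 G);
          d\<zeta>2 = (\<lambda>G. dl2 * d_lam2 G);
          H = (z1 - z2) / (\<zeta>1 - \<zeta>2)
      in dl1 * dl2 * (S2 c + 1 / (lam1 - lam2) ^ 2) - 1 / (\<zeta>1 - \<zeta>2) ^ 2
           = d\<zeta>1 (d\<zeta>2 H / H))"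
proof -
  let ?Z = "outer (z_ser c) - inner (z_ser c)"
  have part1: "- S1 c = logderiv d_lam1 (?Z / (lam1 - lam2))"
    by (rule S1_eq_logderiv)
  then have mixed: "d_lam2 (logderiv d_lam1 (?Z / (lam1 - lam2))) = S2 c"
    by (simp flip: d_lam2_S1)
  have D_\<zeta>: "d_lam1 (lam1 ^ p) = of_nat p * (lam1 :: 'a fls fls) ^ (p - 1)"
    "d_lam2 (lam2 ^ p) = of_nat p * (lam2 :: 'a fls fls) ^ (p - 1)"
    by (simp_all add: d_lam1.D_power d_lam2.D_power)
  have cross: "d_lam1 (lam2 ^ p) = (0 :: 'a fls fls)" "d_lam2 (lam1 ^ p) = (0 :: 'a fls fls)"
    by (simp_all add: d_lam1.D_power d_lam2.D_power)
  have "(of_nat p :: 'a fls fls) \<noteq> 0" "(lam1 :: 'a fls fls) \<noteq> 0" "(lam2 :: 'a fls fls) \<noteq> 0"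
    using assms by (simp_all add: lam1_def lam2_def)
  then have nonzero: "d_lam1 (lam1 ^ p) \<noteq> (0 :: 'a fls fls)" "d_lam2 (lam2 ^ p) \<noteq> (0 :: 'a fls fls)"
    unfolding D_\<zeta> by simp_all
  note part2 = d_lam.mixed_logderiv_change_of_variables[OF d_lam1_lam1 d_lam2_lam2 d_lam1_lam2
      d_lam2_lam1 cross nonzero outer_minus_inner_z_ser_nonzero[of c], unfolded D_\<zeta> mixed]
  show ?thesis
    unfolding Let_def using part1 part2 by (simp add: logderiv_def)
qed

end
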